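(* Let $(R,\mathfrak{m})$ be a Noetherian local ring, $M$ a finitely generated $R$-module and $L$ a submodule of $M$. Let $N$ be an integer with $N>\mathrm{AR}(\mathfrak{m},L\subseteq M)$. If $K$ is a submodule of $M$ such that $L\equiv K \bmod \mathfrak{m}^NM$ (i.e. $L+\mathfrak{m}^NM=K+\mathfrak{m}^NM$), then $L^*\subseteq K^*$.
   Context: The Artin–Rees number $\mathrm{AR}(\mathfrak{m},L\subseteq M)$ is the least integer $s$ such that $\mathfrak{m}^nM\cap L=\mathfrak{m}^{n-s}(\mathfrak{m}^sM\cap L)$ for all $n\ge s$. For a submodule $L\subseteq M$, the initial module $L^*$ is the graded $\mathrm{gr}_{\mathfrak{m}}(R)$-submodule of $\mathrm{gr}_{\mathfrak{m}}(M)=\bigoplus_{i\ge0}\mathfrak{m}^iM/\mathfrak{m}^{i+1}M$ given by the kernel of the natural map $\mathrm{gr}_{\mathfrak{m}}(M)\to\mathrm{gr}_{\mathfrak{m}}(M/L)$; equivalently $L^*=\bigoplus_{i\ge0}(L\cap\mathfrak{m}^iM+\mathfrak{m}^{i+1}M)/\mathfrak{m}^{i+1}M$. *)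

theory Defs
  imports Complex_Main
begin

text \<open>Commutative algebra in the type-class idiom: the ring R is a type 'a :: comm_ring_1,
  the module M is a type 'b :: ab_group_add with a scalar multiplication scale
  satisfying the locale module (from Main, theory Modules).\<close>

definition is_ideal :: "'a::comm_ring_1 set \<Rightarrow> bool" where
  "is_ideal I \<longleftrightarrow> module.subspace ((*) :: 'a \<Rightarrow> 'a \<Rightarrow> 'a) I"

definition ideal_gen :: "'a::comm_ring_1 set \<Rightarrow> 'a set" where
  "ideal_gen S = module.span ((*) :: 'a \<Rightarrow> 'a \<Rightarrow> 'a) S"

definition noetherian_ring :: "'a::comm_ring_1 itself \<Rightarrow> bool" where
  "noetherian_ring _ \<longleftrightarrow> (\<forall>I::'a set. is_ideal I \<longrightarrow> (\<exists>F. finite F \<and> I = ideal_gen F))"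

definition maximal_ideal :: "'a::comm_ring_1 set \<Rightarrow> bool" where
  "maximal_ideal m \<longleftrightarrow> is_ideal m \<and> m \<noteq> UNIV \<and>
     (\<forall>J. is_ideal J \<and> m \<subseteq> J \<longrightarrow> J = m \<or> J = UNIV)"

definition local_ring_with :: "'a::comm_ring_1 set \<Rightarrow> bool" where
  "local_ring_with m \<longleftrightarrow> maximal_ideal m \<and> (\<forall>J. maximal_ideal J \<longrightarrow> J = m)"

definition ideal_mult :: "'a::comm_ring_1 set \<Rightarrow> 'a set \<Rightarrow> 'a set" where
  "ideal_mult I J = ideal_gen {a * b | a b. a \<in> I \<and> b \<in> J}"

primrec ideal_pow :: "'a::comm_ring_1 set \<Rightarrow> nat \<Rightarrow> 'a set" where
  "ideal_pow I 0 = UNIV"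
| "ideal_pow I (Suc n) = ideal_mult I (ideal_pow I n)"

definition ideal_smult ::
  "('a::comm_ring_1 \<Rightarrow> 'b::ab_group_add \<Rightarrow> 'b) \<Rightarrow> 'a set \<Rightarrow> 'b set \<Rightarrow> 'b set" where
  "ideal_smult scale I N = module.span scale {scale r x | r x. r \<in> I \<and> x \<in> N}"

definition pow_mod :: "('a::comm_ring_1 \<Rightarrow> 'b::ab_group_add \<Rightarrow> 'b) \<Rightarrow> 'a set \<Rightarrow> nat \<Rightarrow> 'b set" where
  "pow_mod scale m n = ideal_smult scale (ideal_pow m n) UNIV"

definition finitely_generated_module :: "('a::comm_ring_1 \<Rightarrow> 'b::ab_group_add \<Rightarrow> 'b) \<Rightarrow> bool" where
  "finitely_generated_module scale \<longleftrightarrow> (\<exists>F. finite F \<and> module.span scale F = UNIV)"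

definition set_plus :: "'b::ab_group_add set \<Rightarrow> 'b set \<Rightarrow> 'b set" where
  "set_plus A B = {a + b | a b. a \<in> A \<and> b \<in> B}"

definition artin_rees_number ::
  "('a::comm_ring_1 \<Rightarrow> 'b::ab_group_add \<Rightarrow> 'b) \<Rightarrow> 'a set \<Rightarrow> 'b set \<Rightarrow> nat" where
  "artin_rees_number scale m L = (LEAST s. \<forall>n\<ge>s.
     pow_mod scale m n \<inter> L = ideal_smult scale (ideal_pow m (n - s)) (pow_mod scale m s \<inter> L))"

definition coset :: "'b::ab_group_add \<Rightarrow> 'b set \<Rightarrow> 'b set" where
  "coset x S = {x + y | y. y \<in> S}"

text \<open>Degree-i component of the initial module L^* inside gr_m(M):
  (L \<inter> m^i M + m^(i+1) M) / m^(i+1) M, represented as its set of cosets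
  x + m^(i+1) M in m^i M / m^(i+1) M.  L^* is the graded submodule with these components.\<close>
definition initial_module_comp ::
  "('a::comm_ring_1 \<Rightarrow> 'b::ab_group_add \<Rightarrow> 'b) \<Rightarrow> 'a set \<Rightarrow> 'b set \<Rightarrow> nat \<Rightarrow> 'b set set" where
  "initial_module_comp scale m L i =
     (\<lambda>x. coset x (pow_mod scale m (Suc i))) ` (L \<inter> pow_mod scale m i)"

definition initial_module_le ::
  "('a::comm_ring_1 \<Rightarrow> 'b::ab_group_add \<Rightarrow> 'b) \<Rightarrow> 'a set \<Rightarrow> 'b set \<Rightarrow> 'b set \<Rightarrow> bool" where
  "initial_module_le scale m L K \<longleftrightarrow>
     (\<forall>i. initial_module_comp scale m L i \<subseteq> initial_module_comp scale m K i)"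

end

(*
  The Artin--Rees number s exists: m is generated by finitely many a_i, the Rees module
  \<Oplus>_n m^n M is a finitely generated module over R[a_1 t, ..., a_k t], and a Hilbert basis
  theorem for modules over a Noetherian ring with finitely many commuting operators makes its
  submodule \<Oplus>_n (m^n M \<inter> L) finitely generated; a degree bound s for the generators gives
  m^n M \<inter> L = m^(n-s) (m^s M \<inter> L) for n >= s.

  In degree i, L* \<subseteq> K* says that every x in L \<inter> m^i M is congruent mod m^(i+1) M to some
  k in K \<inter> m^i M. Every element of L is k + z with k in K and z in m^N M. For i < N this
  decomposition of x itself works. For i >= N > s, x is a combination of products r l with
  r in m^(i-s) and l in m^s M \<inter> L; writing l = k + z gives r k in K \<inter> m^i M and
  r z in m^(i-s+N) M \<subseteq> m^(i+1) M.
*)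
theory Submission
  imports Defs "HOL-Library.Function_Algebras"
begin

section \<open>Modules with operators\<close>

text \<open>Modules over \<open>R[Ps]\<close> for a set \<open>Ps\<close> of operators on \<open>M\<close>:
  \<open>op_span sc Ps G\<close> is the \<open>R[Ps]\<close>-submodule generated by \<open>G\<close>.\<close>

inductive_set op_span ::
  "('a::comm_ring_1 \<Rightarrow> 'v::ab_group_add \<Rightarrow> 'v) \<Rightarrow> ('v \<Rightarrow> 'v) set \<Rightarrow> 'v set \<Rightarrow> 'v set"
  for sc Ps G where
  base: "g \<in> G \<Longrightarrow> g \<in> op_span sc Ps G"
| zero: "0 \<in> op_span sc Ps G"
| add: "x \<in> op_span sc Ps G \<Longrightarrow> y \<in> op_span sc Ps G \<Longrightarrow> x + y \<in> op_span sc Ps G"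
| scale: "x \<in> op_span sc Ps G \<Longrightarrow> sc c x \<in> op_span sc Ps G"
| op: "\<phi> \<in> Ps \<Longrightarrow> x \<in> op_span sc Ps G \<Longrightarrow> \<phi> x \<in> op_span sc Ps G"

definition op_closed :: "('a::comm_ring_1 \<Rightarrow> 'v::ab_group_add \<Rightarrow> 'v) \<Rightarrow> ('v \<Rightarrow> 'v) set \<Rightarrow> 'v set \<Rightarrow> bool"
  where "op_closed sc Ps U \<longleftrightarrow> module.subspace sc U \<and> (\<forall>\<phi>\<in>Ps. \<forall>x\<in>U. \<phi> x \<in> U)"

definition op_noetherian ::
  "('a::comm_ring_1 \<Rightarrow> 'v::ab_group_add \<Rightarrow> 'v) \<Rightarrow> ('v \<Rightarrow> 'v) set \<Rightarrow> 'v set \<Rightarrow> bool"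
  where "op_noetherian sc Ps V \<longleftrightarrow>
    (\<forall>U. op_closed sc Ps U \<and> U \<subseteq> V \<longrightarrow> (\<exists>G. finite G \<and> U = op_span sc Ps G))"

lemma op_span_superset: "G \<subseteq> op_span sc Ps G"
  by (auto intro: op_span.base)

lemma op_span_mono: "G \<subseteq> G' \<Longrightarrow> op_span sc Ps G \<subseteq> op_span sc Ps G'"
proof
  fix x assume "G \<subseteq> G'" "x \<in> op_span sc Ps G"
  from this(2) show "x \<in> op_span sc Ps G'"
    by induction (use \<open>G \<subseteq> G'\<close> in \<open>auto intro: op_span.intros\<close>)
qed

lemma op_span_funpow: "\<phi> \<in> Ps \<Longrightarrow> x \<in> op_span sc Ps G \<Longrightarrow> (\<phi> ^^ j) x \<in> op_span sc Ps G"
  by (induction j) (auto intro: op_span.op)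

lemma op_noetherianD:
  "op_noetherian sc Ps V \<Longrightarrow> op_closed sc Ps U \<Longrightarrow> U \<subseteq> V \<Longrightarrow> \<exists>G. finite G \<and> U = op_span sc Ps G"
  unfolding op_noetherian_def by blast

lemma op_noetherian_subset: "op_noetherian sc Ps V \<Longrightarrow> V' \<subseteq> V \<Longrightarrow> op_noetherian sc Ps V'"
  unfolding op_noetherian_def by blast

context module
begin

lemma op_closedD:
  assumes "op_closed scale Ps U"
  shows "0 \<in> U" "x \<in> U \<Longrightarrow> y \<in> U \<Longrightarrow> x + y \<in> U" "x \<in> U \<Longrightarrow> c *s x \<in> U"
    "\<phi> \<in> Ps \<Longrightarrow> x \<in> U \<Longrightarrow> \<phi> x \<in> U" "x \<in> U \<Longrightarrow> y \<in> U \<Longrightarrow> x - y \<in> U"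
  using assms unfolding op_closed_def by (auto intro: subspace_0 subspace_add subspace_scale subspace_diff)

lemma op_closedI:
  "subspace U \<Longrightarrow> (\<And>\<phi> x. \<phi> \<in> Ps \<Longrightarrow> x \<in> U \<Longrightarrow> \<phi> x \<in> U) \<Longrightarrow> op_closed scale Ps U"
  unfolding op_closed_def by blast

lemma op_closed_op_span: "op_closed scale Ps (op_span scale Ps G)"
  unfolding op_closed_def subspace_def by (auto intro: op_span.intros)

lemma op_span_minimal:
  assumes U: "op_closed scale Ps U" and "G \<subseteq> U"
  shows "op_span scale Ps G \<subseteq> U"
proof
  fix x assume "x \<in> op_span scale Ps G"
  then show "x \<in> U"
  proof induction
    case (base g) then show ?case using \<open>G \<subseteq> U\<close> by blast
  next
    case zero then show ?case by (rule op_closedD(1)[OF U])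
  next
    case (add x y) from add.IH show ?case by (rule op_closedD(2)[OF U])
  next
    case (scale x c) from scale.IH show ?case by (rule op_closedD(3)[OF U])
  next
    case (op \<phi> x) from op.hyps(1) op.IH show ?case by (rule op_closedD(4)[OF U])
  qed
qed

lemma op_span_no_ops: "op_span scale {} G = span G"
proof
  show "op_span scale {} G \<subseteq> span G"
    by (rule op_span_minimal) (auto simp: op_closed_def span_superset)
  show "span G \<subseteq> op_span scale {} G"
    using op_closed_op_span[of "{}" G] by (intro span_minimal op_span_superset) (simp add: op_closed_def)
qed

lemma op_closed_UN_chain:
  fixes C :: "nat \<Rightarrow> 'b set"
  assumes closed: "\<And>d. op_closed scale Ps (C d)" and mono: "\<And>d d'. d \<le> d' \<Longrightarrow> C d \<subseteq> C d'"
  shows "op_closed scale Ps (\<Union>d. C d)"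
proof (rule op_closedI)
  show "subspace (\<Union>d. C d)"
    unfolding subspace_def
  proof (intro conjI ballI allI)
    show "0 \<in> (\<Union>d. C d)" using op_closedD(1)[OF closed[of 0]] by blast
  next
    fix x y assume "x \<in> (\<Union>d. C d)" "y \<in> (\<Union>d. C d)"
    then obtain d1 d2 where "x \<in> C d1" "y \<in> C d2" by blast
    then have "x \<in> C (max d1 d2)" "y \<in> C (max d1 d2)"
      using mono[of d1 "max d1 d2"] mono[of d2 "max d1 d2"] by auto
    then have "x + y \<in> C (max d1 d2)" by (rule op_closedD(2)[OF closed])
    then show "x + y \<in> (\<Union>d. C d)" by blast
  next
    fix c x assume "x \<in> (\<Union>d. C d)"
    then obtain d where "x \<in> C d" by blast
    then have "c *s x \<in> C d" by (rule op_closedD(3)[OF closed])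
    then show "c *s x \<in> (\<Union>d. C d)" by blast
  qed
next
  fix \<phi> x assume "\<phi> \<in> Ps" "x \<in> (\<Union>d. C d)"
  then obtain d where "x \<in> C d" by blast
  then have "\<phi> x \<in> C d" by (rule op_closedD(4)[OF closed \<open>\<phi> \<in> Ps\<close>])
  then show "\<phi> x \<in> (\<Union>d. C d)" by blast
qed

lemma op_noetherian_chain_stabilises:
  assumes noeth: "op_noetherian scale Ps V" and closed: "\<And>d. op_closed scale Ps (C d)"
    and sub: "\<And>d. C d \<subseteq> V" and chain: "\<And>d. C d \<subseteq> C (Suc d)"
  shows "\<exists>D. \<forall>d\<ge>D. C d = C D"
proof -
  have mono: "d \<le> d' \<Longrightarrow> C d \<subseteq> C d'" for d d'
    using chain by (rule lift_Suc_mono_le)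
  have "(\<Union>d. C d) \<subseteq> V" using sub by blast
  from op_noetherianD[OF noeth op_closed_UN_chain[OF closed mono] this]
  obtain G where G: "finite G" "(\<Union>d. C d) = op_span scale Ps G" by blast
  then have "\<forall>g\<in>G. \<exists>d. g \<in> C d" using op_span_superset by blast
  then obtain dg where dg: "\<And>g. g \<in> G \<Longrightarrow> g \<in> C (dg g)" by metis
  define D where "D = Max (insert 0 (dg ` G))"
  have "G \<subseteq> C D"
  proof
    fix g assume "g \<in> G"
    then have "dg g \<le> D" unfolding D_def using G(1) by auto
    then show "g \<in> C D" using dg[OF \<open>g \<in> G\<close>] mono by blast
  qed
  then have "(\<Union>d. C d) \<subseteq> C D" using G(2) op_span_minimal[OF closed] by simp
  then have "C d = C D" if "d \<ge> D" for d
    using mono[OF that] by blast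
  then show ?thesis by blast
qed

end

lemma module_mult: "module ((*) :: 'a::comm_ring_1 \<Rightarrow> 'a \<Rightarrow> 'a)"
  by unfold_locales (auto simp: algebra_simps)

context module
begin

lemma is_ideal_coefficients:
  assumes U: "subspace U" and W: "subspace W"
  shows "is_ideal {c. \<exists>u\<in>U. u - c *s f \<in> W}" (is "is_ideal ?I")
  unfolding is_ideal_def module.subspace_def[OF module_mult]
proof (intro conjI ballI allI)
  have "0 - 0 *s f \<in> W" using subspace_0[OF W] by simp
  then show "0 \<in> ?I" using subspace_0[OF U] by blast
next
  fix a b assume "a \<in> ?I" "b \<in> ?I"
  then obtain u v where u: "u \<in> U" "u - a *s f \<in> W" and v: "v \<in> U" "v - b *s f \<in> W" by blast
  have eq: "(u + v) - (a + b) *s f = (u - a *s f) + (v - b *s f)"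
    by (simp add: scale_left_distrib algebra_simps)
  have "(u + v) - (a + b) *s f \<in> W"
    unfolding eq by (rule subspace_add[OF W u(2) v(2)])
  moreover have "u + v \<in> U" using subspace_add[OF U u(1) v(1)] .
  ultimately show "a + b \<in> ?I" by blast
next
  fix c a assume "a \<in> ?I"
  then obtain u where u: "u \<in> U" "u - a *s f \<in> W" by blast
  have eq: "c *s u - (c * a) *s f = c *s (u - a *s f)"
    by (simp add: scale_right_diff_distrib)
  have "c *s u - (c * a) *s f \<in> W"
    unfolding eq by (rule subspace_scale[OF W u(2)])
  moreover have "c *s u \<in> U" using subspace_scale[OF U u(1)] .
  ultimately show "c * a \<in> ?I" by blast
qed

lemma span_eq_of_coefficient_lifts:
  assumes U: "subspace U" and U_sub: "U \<subseteq> span (insert f F)"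
    and C: "finite C" "{c. \<exists>u\<in>U. u - c *s f \<in> span F} = ideal_gen C"
    and lifts: "\<And>c. c \<in> C \<Longrightarrow> lift c \<in> U \<and> lift c - c *s f \<in> span F"
    and G: "U \<inter> span F = span G"
  shows "U = span (G \<union> lift ` C)"
proof
  have "G \<subseteq> U" using G span_superset[of G] by auto
  then have "G \<union> lift ` C \<subseteq> U" using lifts by auto
  then show "span (G \<union> lift ` C) \<subseteq> U" by (rule span_minimal[OF _ U])
  show "U \<subseteq> span (G \<union> lift ` C)"
  proof
    fix u assume "u \<in> U"
    then have "u \<in> span (insert f F)" using U_sub by auto
    then obtain c where c: "u - c *s f \<in> span F"
      unfolding span_breakdown_eq by auto
    then have "c \<in> ideal_gen C"
      using \<open>u \<in> U\<close> C(2) by auto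
    then obtain r where r: "c = (\<Sum>v\<in>C. r v * v)"
      using module.span_finite[OF module_mult C(1)] unfolding ideal_gen_def by auto
    define w where "w = (\<Sum>v\<in>C. r v *s lift v)"
    have w_span: "w \<in> span (G \<union> lift ` C)"
      unfolding w_def by (intro span_sum span_scale span_base) auto
    have "w \<in> U"
      unfolding w_def using lifts by (intro subspace_sum[OF U] subspace_scale[OF U]) auto
    have "(\<Sum>v\<in>C. r v *s (lift v - v *s f)) \<in> span F"
      using lifts by (intro span_sum span_scale) auto
    from span_diff[OF c this]
    have "u - w \<in> span F"
      by (simp add: w_def r scale_sum_left scale_right_diff_distrib sum_subtractf)
    then have "u - w \<in> U \<inter> span F"
      using subspace_diff[OF U \<open>u \<in> U\<close> \<open>w \<in> U\<close>] by auto
    then have "u - w \<in> span (G \<union> lift ` C)"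
      using G span_mono[of G "G \<union> lift ` C"] by auto
    from span_add[OF this w_span] show "u \<in> span (G \<union> lift ` C)" by simp
  qed
qed

lemma op_noetherian_span:
  assumes noetherian: "noetherian_ring TYPE('a)" and "finite F"
  shows "op_noetherian scale {} (span F)"
  using \<open>finite F\<close>
proof (induction F rule: finite_induct)
  case empty
  have "U = op_span scale {} {}" if "op_closed scale {} U" "U \<subseteq> span {}" for U
    using that op_closedD(1)[OF that(1)] by (auto simp: op_span_no_ops)
  then show ?case unfolding op_noetherian_def by (metis finite.emptyI)
next
  case (insert f F)
  show ?case
    unfolding op_noetherian_def
  proof (intro allI impI)
    fix U assume "op_closed scale {} U \<and> U \<subseteq> span (insert f F)"
    then have U: "subspace U" and U_sub: "U \<subseteq> span (insert f F)" by (auto simp: op_closed_def)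
    define I where "I = {c. \<exists>u\<in>U. u - c *s f \<in> span F}"
    have "is_ideal I"
      unfolding I_def by (rule is_ideal_coefficients[OF U subspace_span])
    then obtain C where C: "finite C" "I = ideal_gen C"
      using noetherian unfolding noetherian_ring_def by auto
    have "C \<subseteq> I"
      using C(2) module.span_superset[OF module_mult] unfolding ideal_gen_def by auto
    then have "\<forall>c\<in>C. \<exists>u. u \<in> U \<and> u - c *s f \<in> span F"
      unfolding I_def by auto
    then obtain lift where lifts: "\<And>c. c \<in> C \<Longrightarrow> lift c \<in> U \<and> lift c - c *s f \<in> span F"
      by metis
    have "op_closed scale {} (U \<inter> span F)"
      using subspace_inter[OF U subspace_span] by (simp add: op_closed_def)
    from op_noetherianD[OF insert.IH this]
    obtain G where G: "finite G" "U \<inter> span F = span G"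
      by (auto simp: op_span_no_ops)
    have "U = op_span scale {} (G \<union> lift ` C)"
      using span_eq_of_coefficient_lifts[OF U U_sub C(1) C(2)[unfolded I_def] lifts G(2)]
      by (simp add: op_span_no_ops)
    moreover have "finite (G \<union> lift ` C)" using G(1) C(1) by simp
    ultimately show "\<exists>G. finite G \<and> U = op_span scale {} G" by auto
  qed
qed

end

section \<open>Hilbert's basis theorem for modules with operators\<close>

text \<open>A finitely supported sequence \<open>w\<close> with values in \<open>W\<close> encodes the polynomial
  \<open>\<Sum>\<^sub>k w\<^sub>k t\<^sup>k \<in> W[t]\<close>; \<open>shift_seq\<close> is multiplication by \<open>t\<close>,
  and \<open>(\<circ>) \<phi>\<close> applies \<open>\<phi>\<close> coefficientwise.\<close>

definition vanishes_above :: "(nat \<Rightarrow> 'v::zero) \<Rightarrow> nat \<Rightarrow> bool"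
  where "vanishes_above w d \<longleftrightarrow> (\<forall>k>d. w k = 0)"

definition seq_scale :: "('a \<Rightarrow> 'v \<Rightarrow> 'v) \<Rightarrow> 'a \<Rightarrow> (nat \<Rightarrow> 'v) \<Rightarrow> nat \<Rightarrow> 'v"
  where "seq_scale sc c w = sc c \<circ> w"

definition shift_seq :: "(nat \<Rightarrow> 'v::zero) \<Rightarrow> nat \<Rightarrow> 'v"
  where "shift_seq w k = (case k of 0 \<Rightarrow> 0 | Suc j \<Rightarrow> w j)"

definition poly_seqs :: "'v::zero set \<Rightarrow> (nat \<Rightarrow> 'v) set"
  where "poly_seqs W = {w. range w \<subseteq> W \<and> (\<exists>d. vanishes_above w d)}"

definition poly_ops :: "('v::zero \<Rightarrow> 'v) set \<Rightarrow> ((nat \<Rightarrow> 'v) \<Rightarrow> nat \<Rightarrow> 'v) set"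
  where "poly_ops Ps = insert shift_seq ((\<circ>) ` Ps)"

definition leading_coeffs :: "(nat \<Rightarrow> 'v::zero) set \<Rightarrow> nat \<Rightarrow> 'v set"
  where "leading_coeffs U d = (\<lambda>w. w d) ` {w \<in> U. vanishes_above w d}"

lemma seq_scale_apply: "seq_scale sc c w k = sc c (w k)"
  by (simp add: seq_scale_def)

lemma shift_seq_funpow: "(shift_seq ^^ j) w k = (if k < j then 0 else w (k - j))"
  by (induction j arbitrary: k) (auto simp: shift_seq_def split: nat.split)

lemma vanishes_above_shift_seq: "vanishes_above w d \<Longrightarrow> vanishes_above (shift_seq w) (Suc d)"
  by (auto simp: vanishes_above_def shift_seq_def split: nat.split)

lemma vanishes_above_mono: "vanishes_above w d \<Longrightarrow> d \<le> d' \<Longrightarrow> vanishes_above w d'"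
  by (simp add: vanishes_above_def)

lemma finite_vanishes_above_bound:
  assumes "finite G" and "\<And>g. g \<in> G \<Longrightarrow> \<exists>d. vanishes_above g d"
  shows "\<exists>s. \<forall>g\<in>G. vanishes_above g s"
  using assms
proof (induction G rule: finite_induct)
  case (insert g G)
  obtain s where "\<forall>h\<in>G. vanishes_above h s" using insert.IH insert.prems by auto
  moreover obtain d where "vanishes_above g d" using insert.prems by auto
  ultimately have "\<forall>h\<in>insert g G. vanishes_above h (max s d)"
    using vanishes_above_mono[of _ s "max s d"] vanishes_above_mono[of g d "max s d"] by auto
  then show ?case by blast
qed simp

lemma shift_leading_coeff:
  assumes "h \<in> op_span sc (poly_ops Ps) H" and "vanishes_above h D" and "D \<le> d"
  shows "\<exists>h'\<in>op_span sc (poly_ops Ps) H. vanishes_above h' d \<and> h' d = h D"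
proof (intro bexI conjI)
  show "(shift_seq ^^ (d - D)) h \<in> op_span sc (poly_ops Ps) H"
    using assms(1) by (rule op_span_funpow[rotated]) (simp add: poly_ops_def)
  show "vanishes_above ((shift_seq ^^ (d - D)) h) d" "(shift_seq ^^ (d - D)) h d = h D"
    using assms(2,3) by (auto simp: vanishes_above_def shift_seq_funpow)
qed

context module
begin

lemma seq_module: "module (seq_scale scale)"
  by unfold_locales (auto simp: fun_eq_iff seq_scale_apply scale_right_distrib scale_left_distrib)

lemma op_closed_leading_coeffs:
  assumes zero: "\<forall>\<phi>\<in>Ps. \<phi> 0 = 0" and U: "op_closed (seq_scale scale) (poly_ops Ps) U"
  shows "op_closed scale Ps (leading_coeffs U d)"
proof -
  note closed = module.op_closedD[OF seq_module U]
  show ?thesis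
  proof (rule op_closedI)
    show "subspace (leading_coeffs U d)"
      unfolding subspace_def
    proof (intro conjI ballI allI)
      show "0 \<in> leading_coeffs U d"
        unfolding leading_coeffs_def using closed(1)
        by (intro image_eqI[of _ _ 0]) (auto simp: vanishes_above_def)
    next
      fix x y assume "x \<in> leading_coeffs U d" "y \<in> leading_coeffs U d"
      then obtain v w where "v \<in> U" "vanishes_above v d" "x = v d" "w \<in> U" "vanishes_above w d" "y = w d"
        by (auto simp: leading_coeffs_def)
      then show "x + y \<in> leading_coeffs U d"
        unfolding leading_coeffs_def using closed(2)[of v w]
        by (intro image_eqI[of _ _ "v + w"]) (auto simp: vanishes_above_def)
    next
      fix c x assume "x \<in> leading_coeffs U d"
      then obtain v where "v \<in> U" "vanishes_above v d" "x = v d"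
        by (auto simp: leading_coeffs_def)
      then show "c *s x \<in> leading_coeffs U d"
        unfolding leading_coeffs_def using closed(3)[of v c]
        by (intro image_eqI[of _ _ "seq_scale scale c v"]) (auto simp: vanishes_above_def seq_scale_apply)
    qed
  next
    fix \<phi> x assume "\<phi> \<in> Ps" "x \<in> leading_coeffs U d"
    then obtain v where "v \<in> U" "vanishes_above v d" "x = v d"
      by (auto simp: leading_coeffs_def)
    moreover have "(\<circ>) \<phi> \<in> poly_ops Ps" using \<open>\<phi> \<in> Ps\<close> by (simp add: poly_ops_def)
    ultimately show "\<phi> x \<in> leading_coeffs U d"
      unfolding leading_coeffs_def using closed(4)[of "(\<circ>) \<phi>" v] zero \<open>\<phi> \<in> Ps\<close>
      by (intro image_eqI[of _ _ "\<phi> \<circ> v"]) (auto simp: vanishes_above_def)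
  qed
qed

lemma leading_coeffs_mono:
  assumes "op_closed (seq_scale scale) (poly_ops Ps) U"
  shows "leading_coeffs U d \<subseteq> leading_coeffs U (Suc d)"
proof
  fix x assume "x \<in> leading_coeffs U d"
  then obtain v where "v \<in> U" "vanishes_above v d" "x = v d"
    by (auto simp: leading_coeffs_def)
  moreover have "shift_seq v \<in> U"
    using module.op_closedD(4)[OF seq_module assms _ \<open>v \<in> U\<close>] by (simp add: poly_ops_def)
  ultimately show "x \<in> leading_coeffs U (Suc d)"
    unfolding leading_coeffs_def
    by (intro image_eqI[of _ _ "shift_seq v"]) (auto simp: shift_seq_def vanishes_above_shift_seq)
qed

lemma lift_leading_coeff:
  assumes zero: "\<forall>\<phi>\<in>Ps. \<phi> 0 = 0"
    and lift: "\<And>g. g \<in> G \<Longrightarrow> \<exists>h\<in>H. vanishes_above h d \<and> h d = g"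
    and "c \<in> op_span scale Ps G"
  shows "\<exists>h\<in>op_span (seq_scale scale) (poly_ops Ps) H. vanishes_above h d \<and> h d = c"
  using \<open>c \<in> op_span scale Ps G\<close>
proof induction
  case (base g)
  then obtain h where "h \<in> H" "vanishes_above h d" "h d = g" using lift by blast
  then show ?case using op_span.base[of h H] by blast
next
  case zero
  have "vanishes_above 0 d" by (simp add: vanishes_above_def)
  with op_span.zero show ?case by fastforce
next
  case (add x y)
  then obtain v w where v: "v \<in> op_span (seq_scale scale) (poly_ops Ps) H" "vanishes_above v d" "v d = x"
    and w: "w \<in> op_span (seq_scale scale) (poly_ops Ps) H" "vanishes_above w d" "w d = y"
    by blast
  from op_span.add[OF v(1) w(1)] show ?case
    by (rule bexI[rotated]) (use v w in \<open>auto simp: vanishes_above_def\<close>)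
next
  case (scale x c)
  then obtain v where v: "v \<in> op_span (seq_scale scale) (poly_ops Ps) H" "vanishes_above v d" "v d = x"
    by blast
  from op_span.scale[OF v(1)] show ?case
    by (rule bexI[rotated]) (use v in \<open>auto simp: vanishes_above_def seq_scale_apply\<close>)
next
  case (op \<phi> x)
  then obtain v where v: "v \<in> op_span (seq_scale scale) (poly_ops Ps) H" "vanishes_above v d" "v d = x"
    by blast
  have "(\<circ>) \<phi> \<in> poly_ops Ps" using op.hyps by (simp add: poly_ops_def)
  from op_span.op[OF this v(1)] show ?case
    by (rule bexI[rotated]) (use v zero op.hyps in \<open>auto simp: vanishes_above_def\<close>)
qed


lemma finite_lift_leading_coeffs:
  assumes zero: "\<forall>\<phi>\<in>Ps. \<phi> 0 = 0" and noeth: "op_noetherian scale Ps W"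
    and U: "op_closed (seq_scale scale) (poly_ops Ps) U" and U_sub: "U \<subseteq> poly_seqs W"
  shows "\<exists>H. finite H \<and> H \<subseteq> U \<and> (\<forall>c\<in>leading_coeffs U d.
           \<exists>h\<in>op_span (seq_scale scale) (poly_ops Ps) H. vanishes_above h d \<and> h d = c)"
proof -
  have "leading_coeffs U d \<subseteq> W"
    using U_sub by (auto simp: leading_coeffs_def poly_seqs_def)
  from op_noetherianD[OF noeth op_closed_leading_coeffs[OF zero U] this]
  obtain G where G: "finite G" "leading_coeffs U d = op_span scale Ps G" by blast
  have "G \<subseteq> leading_coeffs U d"
    unfolding G(2) by (rule op_span_superset)
  then have "G \<subseteq> (\<lambda>w. w d) ` {w \<in> U. vanishes_above w d}"
    unfolding leading_coeffs_def .
  from finite_subset_image[OF G(1) this]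
  obtain H where H: "H \<subseteq> {w \<in> U. vanishes_above w d}" "finite H" "G = (\<lambda>w. w d) ` H"
    by blast
  have "\<exists>h\<in>op_span (seq_scale scale) (poly_ops Ps) H. vanishes_above h d \<and> h d = c"
    if "c \<in> leading_coeffs U d" for c
    using that G(2) H by (intro lift_leading_coeff[OF zero]) auto
  with H show ?thesis by blast
qed

lemma op_span_eq_if_lifts_leading_coeffs:
  assumes U: "op_closed (seq_scale scale) Qs U" and "H \<subseteq> U"
    and finite_support: "\<And>u. u \<in> U \<Longrightarrow> \<exists>d. vanishes_above u d"
    and lift: "\<And>d c. c \<in> leading_coeffs U d \<Longrightarrow>
                 \<exists>h\<in>op_span (seq_scale scale) Qs H. vanishes_above h d \<and> h d = c"
  shows "U = op_span (seq_scale scale) Qs H"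
proof
  have span_sub: "op_span (seq_scale scale) Qs H \<subseteq> U"
    by (rule module.op_span_minimal[OF seq_module U \<open>H \<subseteq> U\<close>])
  then show "op_span (seq_scale scale) Qs H \<subseteq> U" .
  have by_degree: "u \<in> op_span (seq_scale scale) Qs H" if "u \<in> U" "\<forall>k\<ge>d. u k = 0" for u d
    using that
  proof (induction d arbitrary: u)
    case 0
    then have "u = 0" by auto
    show ?case unfolding \<open>u = 0\<close> by (rule op_span.zero)
  next
    case (Suc d)
    then have "u d \<in> leading_coeffs U d"
      unfolding leading_coeffs_def vanishes_above_def by auto
    then obtain h where h: "h \<in> op_span (seq_scale scale) Qs H" "vanishes_above h d" "h d = u d"
      using lift by blast
    have "u - h \<in> U"
      using module.op_closedD(5)[OF seq_module U Suc.prems(1)] h(1) span_sub by blast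
    moreover have "\<forall>k\<ge>d. (u - h) k = 0"
    proof (intro allI impI)
      fix k assume "d \<le> k"
      then show "(u - h) k = 0"
        using Suc.prems(2) h(2,3) by (cases "k = d") (auto simp: vanishes_above_def)
    qed
    ultimately have "u - h \<in> op_span (seq_scale scale) Qs H" by (rule Suc.IH)
    from op_span.add[OF this h(1)] show ?case by simp
  qed
  show "U \<subseteq> op_span (seq_scale scale) Qs H"
  proof
    fix u assume "u \<in> U"
    then obtain d where "vanishes_above u d" using finite_support by blast
    then have "\<forall>k\<ge>Suc d. u k = 0" by (simp add: vanishes_above_def Suc_le_eq)
    with \<open>u \<in> U\<close> show "u \<in> op_span (seq_scale scale) Qs H" by (rule by_degree)
  qed
qed

lemma op_noetherian_poly_seqs:
  assumes zero: "\<forall>\<phi>\<in>Ps. \<phi> 0 = 0" and noeth: "op_noetherian scale Ps W"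
  shows "op_noetherian (seq_scale scale) (poly_ops Ps) (poly_seqs W)"
  unfolding op_noetherian_def
proof (intro allI impI)
  fix U assume "op_closed (seq_scale scale) (poly_ops Ps) U \<and> U \<subseteq> poly_seqs W"
  then have U: "op_closed (seq_scale scale) (poly_ops Ps) U" and U_sub: "U \<subseteq> poly_seqs W"
    by auto
  have "leading_coeffs U d \<subseteq> W" for d
    using U_sub by (auto simp: leading_coeffs_def poly_seqs_def)
  with op_noetherian_chain_stabilises[OF noeth, of "leading_coeffs U"]
  obtain D where D: "\<And>d. d \<ge> D \<Longrightarrow> leading_coeffs U d = leading_coeffs U D"
    using op_closed_leading_coeffs[OF zero U] leading_coeffs_mono[OF U] by blast
  obtain Hd where Hd: "\<And>d. finite (Hd d)" "\<And>d. Hd d \<subseteq> U"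
    "\<And>d c. c \<in> leading_coeffs U d \<Longrightarrow>
       \<exists>h\<in>op_span (seq_scale scale) (poly_ops Ps) (Hd d). vanishes_above h d \<and> h d = c"
    using finite_lift_leading_coeffs[OF zero noeth U U_sub] by metis
  define H where "H = (\<Union>d\<le>D. Hd d)"
  have lift: "\<exists>h\<in>op_span (seq_scale scale) (poly_ops Ps) H. vanishes_above h d \<and> h d = c"
    if "c \<in> leading_coeffs U d" for c d
  proof (cases "d \<le> D")
    case True
    then have "op_span (seq_scale scale) (poly_ops Ps) (Hd d) \<subseteq> op_span (seq_scale scale) (poly_ops Ps) H"
      by (intro op_span_mono) (auto simp: H_def)
    with Hd(3)[OF that] show ?thesis by blast
  next
    case False
    then have "leading_coeffs U d = leading_coeffs U D" by (intro D) simp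
    with that have "c \<in> leading_coeffs U D" by simp
    then obtain h where h: "h \<in> op_span (seq_scale scale) (poly_ops Ps) (Hd D)"
      "vanishes_above h D" "h D = c"
      using Hd(3) by blast
    have "h \<in> op_span (seq_scale scale) (poly_ops Ps) H"
      using h(1) op_span_mono[of "Hd D" H] by (auto simp: H_def)
    moreover have "D \<le> d" using False by simp
    ultimately show ?thesis using shift_leading_coeff[of h _ Ps H D d] h(2,3) by simp
  qed
  have "U = op_span (seq_scale scale) (poly_ops Ps) H"
    using Hd(2) U_sub
    by (intro op_span_eq_if_lifts_leading_coeffs[OF U _ _ lift]) (auto simp: H_def poly_seqs_def)
  moreover have "finite H" using Hd(1) by (simp add: H_def)
  ultimately show "\<exists>G. finite G \<and> U = op_span (seq_scale scale) (poly_ops Ps) G" by blast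
qed

end

lemma op_span_image_subset:
  assumes span_V: "op_span sc Ps G \<subseteq> V"
    and f_add: "\<And>x y. x \<in> V \<Longrightarrow> y \<in> V \<Longrightarrow> f (x + y) = f x + f y"
    and f_scale: "\<And>c x. x \<in> V \<Longrightarrow> f (sc c x) = sc' c (f x)"
    and f_zero: "f 0 = 0"
    and intertwine: "\<And>\<phi>. \<phi> \<in> Ps \<Longrightarrow> \<exists>q\<in>Qs. \<forall>x\<in>V. f (\<phi> x) = q (f x)"
  shows "f ` op_span sc Ps G \<subseteq> op_span sc' Qs (f ` G)"
proof clarify
  fix x assume "x \<in> op_span sc Ps G"
  then show "f x \<in> op_span sc' Qs (f ` G)"
  proof induction
    case (base g) then show ?case by (simp add: op_span.base)
  next
    case zero then show ?case by (simp add: f_zero op_span.zero)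
  next
    case (add x y)
    then have "f (x + y) = f x + f y" using span_V by (intro f_add) auto
    then show ?case using add.IH by (simp add: op_span.add)
  next
    case (scale x c)
    then have "f (sc c x) = sc' c (f x)" using span_V by (intro f_scale) auto
    then show ?case using scale.IH by (simp add: op_span.scale)
  next
    case (op \<phi> x)
    then obtain q where "q \<in> Qs" "\<forall>x\<in>V. f (\<phi> x) = q (f x)" using intertwine by blast
    moreover have "x \<in> V" using op.hyps(2) span_V by blast
    ultimately show ?case using op_span.op[OF \<open>q \<in> Qs\<close> op.IH] by simp
  qed
qed

lemma op_noetherian_image:
  assumes sc: "module sc" and sc': "module sc'"
    and noeth: "op_noetherian sc Ps V" and V: "op_closed sc Ps V"
    and f_add: "\<And>x y. x \<in> V \<Longrightarrow> y \<in> V \<Longrightarrow> f (x + y) = f x + f y"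
    and f_scale: "\<And>c x. x \<in> V \<Longrightarrow> f (sc c x) = sc' c (f x)"
    and intertwine: "\<And>\<phi>. \<phi> \<in> Ps \<Longrightarrow> \<exists>q\<in>Qs. \<forall>x\<in>V. f (\<phi> x) = q (f x)"
  shows "op_noetherian sc' Qs (f ` V)"
  unfolding op_noetherian_def
proof (intro allI impI)
  fix U assume "op_closed sc' Qs U \<and> U \<subseteq> f ` V"
  then have U: "op_closed sc' Qs U" and U_sub: "U \<subseteq> f ` V" by auto
  note V_closed = module.op_closedD[OF sc V] and U_closed = module.op_closedD[OF sc' U]
  have f0: "f 0 = 0" using f_add[OF V_closed(1) V_closed(1)] by simp
  define P where "P = {x \<in> V. f x \<in> U}"
  have "op_closed sc Ps P"
  proof (rule module.op_closedI[OF sc])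
    show "module.subspace sc P"
      unfolding module.subspace_def[OF sc] P_def
      using V_closed U_closed f0 f_add f_scale by auto
  next
    fix \<phi> x assume "\<phi> \<in> Ps" "x \<in> P"
    with intertwine obtain q where "q \<in> Qs" "f (\<phi> x) = q (f x)" unfolding P_def by blast
    then show "\<phi> x \<in> P" using \<open>\<phi> \<in> Ps\<close> \<open>x \<in> P\<close> V_closed(4) U_closed(4) unfolding P_def by auto
  qed
  moreover have "P \<subseteq> V" unfolding P_def by blast
  ultimately obtain G where G: "finite G" "P = op_span sc Ps G"
    using op_noetherianD[OF noeth] by blast
  have "U = op_span sc' Qs (f ` G)"
  proof
    have "U \<subseteq> f ` P" using U_sub unfolding P_def by blast
    also have "\<dots> \<subseteq> op_span sc' Qs (f ` G)"
      unfolding G(2) using \<open>P \<subseteq> V\<close> G(2)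
      by (intro op_span_image_subset[where V = V]) (simp_all add: f_add f_scale f0 intertwine)
    finally show "U \<subseteq> op_span sc' Qs (f ` G)" .
    have "G \<subseteq> P" using op_span_superset[of G sc Ps] by (simp add: G(2))
    then have "f ` G \<subseteq> U" unfolding P_def by blast
    then show "op_span sc' Qs (f ` G) \<subseteq> U" by (rule module.op_span_minimal[OF sc' U])
  qed
  with G(1) show "\<exists>G. finite G \<and> U = op_span sc' Qs G" by (intro exI[of _ "f ` G"]) simp
qed

definition eval_seq :: "('v::ab_group_add \<Rightarrow> 'v) \<Rightarrow> (nat \<Rightarrow> 'v) \<Rightarrow> 'v"
  where "eval_seq \<psi> w = (\<Sum>k | w k \<noteq> 0. (\<psi> ^^ k) (w k))"

context module
begin

lemma module_hom_funpow: "module_hom scale scale \<psi> \<Longrightarrow> module_hom scale scale (\<psi> ^^ k)"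
  by (induction k) (auto intro: module_hom_compose module_hom_ident simp: id_def)

lemma eval_seq_eq_sum:
  assumes "module_hom scale scale \<psi>" and "vanishes_above w d"
  shows "eval_seq \<psi> w = (\<Sum>k\<le>d. (\<psi> ^^ k) (w k))"
  unfolding eval_seq_def
proof (rule sum.mono_neutral_left)
  show "{k. w k \<noteq> 0} \<subseteq> {..d}" using assms(2) by (auto simp: vanishes_above_def not_less[symmetric])
  show "\<forall>k\<in>{..d} - {k. w k \<noteq> 0}. (\<psi> ^^ k) (w k) = 0"
    using module_hom.zero[OF module_hom_funpow[OF assms(1)]] by auto
qed simp

lemma eval_seq_add:
  assumes \<psi>: "module_hom scale scale \<psi>" and "vanishes_above v d1" and "vanishes_above w d2"
  shows "eval_seq \<psi> (v + w) = eval_seq \<psi> v + eval_seq \<psi> w"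
proof -
  let ?d = "max d1 d2"
  have "vanishes_above v ?d" "vanishes_above w ?d" "vanishes_above (v + w) ?d"
    using assms(2,3) by (auto simp: vanishes_above_def)
  then show ?thesis
    using module_hom.add[OF module_hom_funpow[OF \<psi>]]
    by (simp add: eval_seq_eq_sum[OF \<psi>] sum.distrib)
qed

lemma eval_seq_scale:
  assumes "module_hom scale scale \<psi>" and "vanishes_above w d"
  shows "eval_seq \<psi> (seq_scale scale c w) = c *s eval_seq \<psi> w"
proof -
  have "vanishes_above (seq_scale scale c w) d"
    using assms(2) by (simp add: vanishes_above_def seq_scale_apply)
  then show ?thesis
    using assms module_hom.scale[OF module_hom_funpow[OF assms(1)]]
    by (simp add: eval_seq_eq_sum seq_scale_apply scale_sum_right)
qed

lemma eval_seq_comp: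
  assumes \<psi>: "module_hom scale scale \<psi>" and \<phi>: "module_hom scale scale \<phi>"
    and comm: "\<phi> \<circ> \<psi> = \<psi> \<circ> \<phi>" and "vanishes_above w d"
  shows "eval_seq \<psi> (\<phi> \<circ> w) = \<phi> (eval_seq \<psi> w)"
proof -
  have "vanishes_above (\<phi> \<circ> w) d"
    using assms(4) module_hom.zero[OF \<phi>] by (simp add: vanishes_above_def)
  moreover have "\<phi> ((\<psi> ^^ k) x) = (\<psi> ^^ k) (\<phi> x)" for k x
    using comm by (induction k) (auto simp: fun_eq_iff)
  ultimately show ?thesis
    using assms(4) by (simp add: eval_seq_eq_sum[OF \<psi>] module_hom.sum[OF \<phi>])
qed

lemma eval_seq_shift:
  assumes \<psi>: "module_hom scale scale \<psi>" and "vanishes_above w d"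
  shows "eval_seq \<psi> (shift_seq w) = \<psi> (eval_seq \<psi> w)"
proof -
  have "eval_seq \<psi> (shift_seq w) = (\<Sum>k\<le>Suc d. (\<psi> ^^ k) (shift_seq w k))"
    by (rule eval_seq_eq_sum[OF \<psi> vanishes_above_shift_seq[OF assms(2)]])
  also have "\<dots> = (\<Sum>k\<le>d. \<psi> ((\<psi> ^^ k) (w k)))"
    by (subst sum.atMost_Suc_shift) (simp add: shift_seq_def funpow_swap1)
  also have "\<dots> = \<psi> (eval_seq \<psi> w)"
    using assms by (simp add: eval_seq_eq_sum module_hom.sum[OF \<psi>])
  finally show ?thesis .
qed


lemma subspace_poly_seqs:
  assumes W: "subspace W"
  shows "module.subspace (seq_scale scale) (poly_seqs W)"
  unfolding module.subspace_def[OF seq_module]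
proof (intro conjI ballI allI)
  show "0 \<in> poly_seqs W" using subspace_0[OF W] by (auto simp: poly_seqs_def vanishes_above_def)
next
  fix v w assume "v \<in> poly_seqs W" "w \<in> poly_seqs W"
  then obtain d1 d2 where "range v \<subseteq> W" "vanishes_above v d1" "range w \<subseteq> W" "vanishes_above w d2"
    by (auto simp: poly_seqs_def)
  then have "range (v + w) \<subseteq> W" "vanishes_above (v + w) (max d1 d2)"
    using subspace_add[OF W] by (auto simp: vanishes_above_def image_subset_iff)
  then show "v + w \<in> poly_seqs W" by (auto simp: poly_seqs_def)
next
  fix c w assume "w \<in> poly_seqs W"
  then obtain d where "range w \<subseteq> W" "vanishes_above w d"
    by (auto simp: poly_seqs_def)
  then have "range (seq_scale scale c w) \<subseteq> W" "vanishes_above (seq_scale scale c w) d"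
    using subspace_scale[OF W] by (auto simp: vanishes_above_def seq_scale_apply)
  then show "seq_scale scale c w \<in> poly_seqs W" by (auto simp: poly_seqs_def)
qed

lemma op_closed_poly_seqs:
  assumes zero: "\<forall>\<phi>\<in>Ps. \<phi> 0 = 0" and W: "op_closed scale Ps W"
  shows "op_closed (seq_scale scale) (poly_ops Ps) (poly_seqs W)"
proof (rule module.op_closedI[OF seq_module])
  show "module.subspace (seq_scale scale) (poly_seqs W)"
    using W by (simp add: op_closed_def subspace_poly_seqs)
next
  note closed = op_closedD[OF W]
  fix \<chi> w assume "\<chi> \<in> poly_ops Ps" "w \<in> poly_seqs W"
  then obtain d where w: "range w \<subseteq> W" "vanishes_above w d"
    by (auto simp: poly_seqs_def)
  from \<open>\<chi> \<in> poly_ops Ps\<close> consider "\<chi> = shift_seq" | \<phi> where "\<phi> \<in> Ps" "\<chi> = (\<circ>) \<phi>"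
    unfolding poly_ops_def by blast
  then show "\<chi> w \<in> poly_seqs W"
  proof cases
    case 1
    have "range (shift_seq w) \<subseteq> W"
      using w(1) closed(1) by (auto simp: shift_seq_def image_subset_iff split: nat.split)
    then show ?thesis using 1 vanishes_above_shift_seq[OF w(2)] by (auto simp: poly_seqs_def)
  next
    case 2
    have "range (\<phi> \<circ> w) \<subseteq> W" "vanishes_above (\<phi> \<circ> w) d"
      using w closed(4)[OF 2(1)] zero 2(1) by (auto simp: vanishes_above_def)
    then show ?thesis using 2 by (auto simp: poly_seqs_def)
  qed
qed

lemma subspace_eval_seq_image:
  assumes \<psi>: "module_hom scale scale \<psi>" and S: "module.subspace (seq_scale scale) S"
    and finite_support: "\<And>w. w \<in> S \<Longrightarrow> \<exists>d. vanishes_above w d"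
  shows "subspace (eval_seq \<psi> ` S)"
  unfolding subspace_def
proof (intro conjI ballI allI)
  have "eval_seq \<psi> 0 = 0" by (simp add: eval_seq_def)
  with module.subspace_0[OF seq_module S] show "0 \<in> eval_seq \<psi> ` S" by (metis rev_image_eqI)
next
  fix x y assume "x \<in> eval_seq \<psi> ` S" "y \<in> eval_seq \<psi> ` S"
  then obtain v w where v: "v \<in> S" "x = eval_seq \<psi> v" and w: "w \<in> S" "y = eval_seq \<psi> w"
    by blast
  obtain d1 d2 where "vanishes_above v d1" "vanishes_above w d2"
    using finite_support v(1) w(1) by blast
  then have "x + y = eval_seq \<psi> (v + w)"
    using v(2) w(2) by (simp add: eval_seq_add[OF \<psi>])
  with module.subspace_add[OF seq_module S v(1) w(1)] show "x + y \<in> eval_seq \<psi> ` S" by blast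
next
  fix c x assume "x \<in> eval_seq \<psi> ` S"
  then obtain w where w: "w \<in> S" "x = eval_seq \<psi> w" by blast
  obtain d where "vanishes_above w d"
    using finite_support w(1) by blast
  then have "c *s x = eval_seq \<psi> (seq_scale scale c w)"
    using w(2) by (simp add: eval_seq_scale[OF \<psi>])
  with module.subspace_scale[OF seq_module S w(1)] show "c *s x \<in> eval_seq \<psi> ` S" by blast
qed

lemma op_closed_eval_seq_image:
  assumes \<psi>: "module_hom scale scale \<psi>"
    and Ps: "\<forall>\<phi>\<in>Ps. module_hom scale scale \<phi> \<and> \<phi> \<circ> \<psi> = \<psi> \<circ> \<phi>"
    and W: "op_closed scale Ps W"
  shows "op_closed scale (insert \<psi> Ps) (eval_seq \<psi> ` poly_seqs W)"
proof (rule op_closedI)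
  have zero: "\<forall>\<phi>\<in>Ps. \<phi> 0 = 0" using Ps module_hom.zero by blast
  note closed = module.op_closedD[OF seq_module op_closed_poly_seqs[OF zero W]]
  have "module.subspace (seq_scale scale) (poly_seqs W)"
    using W by (simp add: op_closed_def subspace_poly_seqs)
  then show "subspace (eval_seq \<psi> ` poly_seqs W)"
    by (rule subspace_eval_seq_image[OF \<psi>]) (simp add: poly_seqs_def)
  fix \<chi> x assume "\<chi> \<in> insert \<psi> Ps" "x \<in> eval_seq \<psi> ` poly_seqs W"
  then obtain w where w: "w \<in> poly_seqs W" "x = eval_seq \<psi> w" by blast
  then obtain d where d: "vanishes_above w d" by (auto simp: poly_seqs_def)
  from \<open>\<chi> \<in> insert \<psi> Ps\<close> show "\<chi> x \<in> eval_seq \<psi> ` poly_seqs W"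
  proof
    assume "\<chi> = \<psi>"
    then have "\<chi> x = eval_seq \<psi> (shift_seq w)"
      using w(2) by (simp add: eval_seq_shift[OF \<psi> d])
    moreover have "shift_seq w \<in> poly_seqs W"
      using closed(4)[OF _ w(1), of shift_seq] by (simp add: poly_ops_def)
    ultimately show ?thesis by (simp add: rev_image_eqI)
  next
    assume "\<chi> \<in> Ps"
    then have "module_hom scale scale \<chi>" "\<chi> \<circ> \<psi> = \<psi> \<circ> \<chi>" using Ps by auto
    from eval_seq_comp[OF \<psi> this d] have "\<chi> x = eval_seq \<psi> (\<chi> \<circ> w)"
      using w(2) by simp
    moreover have "\<chi> \<circ> w \<in> poly_seqs W"
      using closed(4)[OF _ w(1), of "(\<circ>) \<chi>"] \<open>\<chi> \<in> Ps\<close> by (simp add: poly_ops_def)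
    ultimately show ?thesis by (simp add: rev_image_eqI)
  qed
qed

lemma eval_seq_intertwines_poly_ops:
  assumes \<psi>: "module_hom scale scale \<psi>"
    and Ps: "\<forall>\<phi>\<in>Ps. module_hom scale scale \<phi> \<and> \<phi> \<circ> \<psi> = \<psi> \<circ> \<phi>"
    and "\<chi> \<in> poly_ops Ps"
  shows "\<exists>q\<in>insert \<psi> Ps. \<forall>w\<in>poly_seqs W. eval_seq \<psi> (\<chi> w) = q (eval_seq \<psi> w)"
proof -
  have finite_support: "\<exists>d. vanishes_above w d" if "w \<in> poly_seqs W" for w
    using that by (simp add: poly_seqs_def)
  from \<open>\<chi> \<in> poly_ops Ps\<close> consider "\<chi> = shift_seq" | \<phi> where "\<phi> \<in> Ps" "\<chi> = (\<circ>) \<phi>"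
    unfolding poly_ops_def by blast
  then show ?thesis
  proof cases
    case 1
    show ?thesis
    proof (intro bexI[of _ \<psi>] ballI)
      fix w assume "w \<in> poly_seqs W"
      then obtain d where "vanishes_above w d" using finite_support by blast
      then show "eval_seq \<psi> (\<chi> w) = \<psi> (eval_seq \<psi> w)"
        unfolding 1 by (rule eval_seq_shift[OF \<psi>])
    qed simp
  next
    case 2
    show ?thesis
    proof (intro bexI[of _ \<phi>] ballI)
      fix w assume "w \<in> poly_seqs W"
      then obtain d where "vanishes_above w d" using finite_support by blast
      then show "eval_seq \<psi> (\<chi> w) = \<phi> (eval_seq \<psi> w)"
        unfolding 2(2) using Ps 2(1) by (intro eval_seq_comp[OF \<psi>]) auto
    qed (use 2 in simp)
  qed
qed

lemma op_span_insert_subset_eval_seq_image: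
  assumes \<psi>: "module_hom scale scale \<psi>"
    and Ps: "\<forall>\<phi>\<in>Ps. module_hom scale scale \<phi> \<and> \<phi> \<circ> \<psi> = \<psi> \<circ> \<phi>"
  shows "op_span scale (insert \<psi> Ps) F \<subseteq> eval_seq \<psi> ` poly_seqs (op_span scale Ps F)"
proof (rule op_span_minimal[OF op_closed_eval_seq_image[OF \<psi> Ps op_closed_op_span]], clarify)
  fix g assume "g \<in> F"
  have "vanishes_above (0(0 := g)) 0" by (simp add: vanishes_above_def)
  then have "0(0 := g) \<in> poly_seqs (op_span scale Ps F)"
    using \<open>g \<in> F\<close> op_span.base[of g F] op_span.zero by (auto simp: poly_seqs_def)
  moreover have "g = eval_seq \<psi> (0(0 := g))"
    using eval_seq_eq_sum[OF \<psi> \<open>vanishes_above (0(0 := g)) 0\<close>] by simp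
  ultimately show "g \<in> eval_seq \<psi> ` poly_seqs (op_span scale Ps F)" by blast
qed

text \<open>Hilbert's basis theorem: the \<open>R[Ps, \<psi>]\<close>-module generated by \<open>F\<close> is the image of
  \<open>(R[Ps] F)[t]\<close> under \<open>t \<mapsto> \<psi>\<close>.\<close>

lemma op_noetherian_insert_op:
  assumes \<psi>: "module_hom scale scale \<psi>"
    and Ps: "\<forall>\<phi>\<in>Ps. module_hom scale scale \<phi> \<and> \<phi> \<circ> \<psi> = \<psi> \<circ> \<phi>"
    and noeth: "op_noetherian scale Ps (op_span scale Ps F)"
  shows "op_noetherian scale (insert \<psi> Ps) (op_span scale (insert \<psi> Ps) F)"
proof -
  let ?W = "poly_seqs (op_span scale Ps F)"
  have zero: "\<forall>\<phi>\<in>Ps. \<phi> 0 = 0" using Ps module_hom.zero by blast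
  have finite_support: "\<exists>d. vanishes_above w d" if "w \<in> ?W" for w
    using that by (simp add: poly_seqs_def)
  have "op_noetherian scale (insert \<psi> Ps) (eval_seq \<psi> ` ?W)"
  proof (rule op_noetherian_image[OF seq_module module_axioms op_noetherian_poly_seqs[OF zero noeth]
        op_closed_poly_seqs[OF zero op_closed_op_span]])
    fix v w assume "v \<in> ?W" "w \<in> ?W"
    then obtain d1 d2 where "vanishes_above v d1" "vanishes_above w d2"
      using finite_support by blast
    then show "eval_seq \<psi> (v + w) = eval_seq \<psi> v + eval_seq \<psi> w"
      by (rule eval_seq_add[OF \<psi>])
  next
    fix c w assume "w \<in> ?W"
    then obtain d where "vanishes_above w d"
      using finite_support by blast
    then show "eval_seq \<psi> (seq_scale scale c w) = c *s eval_seq \<psi> w"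
      by (rule eval_seq_scale[OF \<psi>])
  next
    fix \<chi> assume "\<chi> \<in> poly_ops Ps"
    then show "\<exists>q\<in>insert \<psi> Ps. \<forall>w\<in>?W. eval_seq \<psi> (\<chi> w) = q (eval_seq \<psi> w)"
      by (rule eval_seq_intertwines_poly_ops[OF \<psi> Ps])
  qed
  then show ?thesis
    using op_span_insert_subset_eval_seq_image[OF \<psi> Ps] by (rule op_noetherian_subset)
qed

lemma op_noetherian_op_span:
  assumes noetherian: "noetherian_ring TYPE('a)" and "finite Ps" and "finite F"
    and linear: "\<forall>\<phi>\<in>Ps. module_hom scale scale \<phi>"
    and commuting: "\<forall>\<phi>\<in>Ps. \<forall>\<chi>\<in>Ps. \<phi> \<circ> \<chi> = \<chi> \<circ> \<phi>"
  shows "op_noetherian scale Ps (op_span scale Ps F)"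
  using \<open>finite Ps\<close> linear commuting
proof (induction Ps rule: finite_induct)
  case empty
  then show ?case using op_noetherian_span[OF noetherian \<open>finite F\<close>] by (simp add: op_span_no_ops)
next
  case (insert \<psi> Ps)
  have "module_hom scale scale \<psi>" using insert.prems(1) by blast
  moreover have "\<forall>\<phi>\<in>Ps. module_hom scale scale \<phi> \<and> \<phi> \<circ> \<psi> = \<psi> \<circ> \<phi>"
    using insert.prems by blast
  moreover have "op_noetherian scale Ps (op_span scale Ps F)"
    using insert.IH insert.prems by blast
  ultimately show ?case by (rule op_noetherian_insert_op)
qed

end

section \<open>Powers of an ideal\<close>

context module
begin

lemma is_ideal_scale_preimage: "subspace S \<Longrightarrow> is_ideal {r. r *s y \<in> S}"
  unfolding is_ideal_def module.subspace_def[OF module_mult]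
  using subspace_0 subspace_add subspace_scale
  by (auto simp: scale_left_distrib scale_scale[symmetric] simp del: scale_scale)

lemma pow_mod_subspace: "subspace (pow_mod scale m n)"
  by (simp add: pow_mod_def ideal_smult_def)

lemma ideal_smult_subspace: "subspace (ideal_smult scale I X)"
  by (simp add: ideal_smult_def)

lemma ideal_smult_UNIV: "subspace X \<Longrightarrow> ideal_smult scale UNIV X = X"
proof -
  assume "subspace X"
  have "{r *s x |r x. r \<in> UNIV \<and> x \<in> X} = X"
    using subspace_scale[OF \<open>subspace X\<close>] by (auto intro: exI[of _ 1])
  then show ?thesis by (simp add: ideal_smult_def \<open>subspace X\<close>)
qed

lemma pow_mod_0: "pow_mod scale m 0 = UNIV"
  by (simp add: pow_mod_def ideal_smult_UNIV)

lemma ideal_pow_antimono: "k \<le> n \<Longrightarrow> ideal_pow m n \<subseteq> ideal_pow m k"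
proof (induction n rule: dec_induct)
  case (step n)
  have "is_ideal (ideal_pow m n)"
    by (cases n) (simp_all add: is_ideal_def ideal_mult_def ideal_gen_def
        module.subspace_span[OF module_mult] module.subspace_UNIV[OF module_mult])
  then have "{a * b |a b. a \<in> m \<and> b \<in> ideal_pow m n} \<subseteq> ideal_pow m n"
    using module.subspace_scale[OF module_mult] unfolding is_ideal_def by auto
  then have "ideal_pow m (Suc n) \<subseteq> ideal_pow m n"
    using module.span_minimal[OF module_mult] \<open>is_ideal (ideal_pow m n)\<close>
    unfolding is_ideal_def ideal_pow.simps ideal_mult_def ideal_gen_def by blast
  with step.IH show ?case by blast
qed simp

lemma pow_mod_antimono: "k \<le> n \<Longrightarrow> pow_mod scale m n \<subseteq> pow_mod scale m k"
  unfolding pow_mod_def ideal_smult_def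
  by (rule span_mono) (use ideal_pow_antimono in blast)

lemma scale_mem_ideal_smult_Suc:
  assumes a: "a \<in> m" and y: "y \<in> ideal_smult scale (ideal_pow m j) X"
  shows "a *s y \<in> ideal_smult scale (ideal_pow m (Suc j)) X"
proof -
  let ?T = "{y. a *s y \<in> ideal_smult scale (ideal_pow m (Suc j)) X}"
  have "subspace ?T"
    unfolding subspace_def
  proof (intro conjI ballI allI)
    show "0 \<in> ?T" using subspace_0[OF ideal_smult_subspace] by simp
  next
    fix x y assume "x \<in> ?T" "y \<in> ?T"
    then show "x + y \<in> ?T"
      using subspace_add[OF ideal_smult_subspace] by (simp add: scale_right_distrib)
  next
    fix c x assume "x \<in> ?T"
    then have "a *s x \<in> ideal_smult scale (ideal_pow m (Suc j)) X" by simp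
    then have "c *s a *s x \<in> ideal_smult scale (ideal_pow m (Suc j)) X"
      by (rule subspace_scale[OF ideal_smult_subspace])
    then show "c *s x \<in> ?T" by (simp add: mult.commute)
  qed
  moreover have "{r *s x |r x. r \<in> ideal_pow m j \<and> x \<in> X} \<subseteq> ?T"
  proof clarify
    fix r x assume "r \<in> ideal_pow m j" "x \<in> X"
    then have "a * r \<in> ideal_pow m (Suc j)"
      using a unfolding ideal_pow.simps ideal_mult_def ideal_gen_def
      by (intro module.span_base[OF module_mult]) blast
    with \<open>x \<in> X\<close> show "a *s r *s x \<in> ideal_smult scale (ideal_pow m (Suc j)) X"
      unfolding ideal_smult_def by (auto intro: span_base)
  qed
  ultimately show ?thesis
    using y span_minimal unfolding ideal_smult_def by blast
qed

lemma scale_mem_pow_mod_add: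
  "r \<in> ideal_pow m k \<Longrightarrow> x \<in> pow_mod scale m n \<Longrightarrow> r *s x \<in> pow_mod scale m (k + n)"
proof (induction k arbitrary: r)
  case 0
  then show ?case using subspace_scale[OF pow_mod_subspace] by simp
next
  case (Suc k)
  let ?R = "{r. r *s x \<in> pow_mod scale m (Suc k + n)}"
  have gens: "{a * b |a b. a \<in> m \<and> b \<in> ideal_pow m k} \<subseteq> ?R"
  proof clarify
    fix a b assume "a \<in> m" "b \<in> ideal_pow m k"
    have "b *s x \<in> pow_mod scale m (k + n)"
      by (rule Suc.IH[OF \<open>b \<in> ideal_pow m k\<close> Suc.prems(2)])
    then have "a *s b *s x \<in> pow_mod scale m (Suc (k + n))"
      unfolding pow_mod_def by (rule scale_mem_ideal_smult_Suc[OF \<open>a \<in> m\<close>])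
    then show "(a * b) *s x \<in> pow_mod scale m (Suc k + n)" by simp
  qed
  have "is_ideal ?R" by (rule is_ideal_scale_preimage[OF pow_mod_subspace])
  then have "ideal_pow m (Suc k) \<subseteq> ?R"
    using module.span_minimal[OF module_mult gens]
    by (simp add: is_ideal_def ideal_mult_def ideal_gen_def)
  then show ?case using Suc.prems(1) by blast
qed

lemma ideal_smult_pow_inter_subset:
  assumes L: "subspace L"
  shows "ideal_smult scale (ideal_pow m k) (pow_mod scale m n \<inter> L) \<subseteq> pow_mod scale m (k + n) \<inter> L"
  unfolding ideal_smult_def
proof (rule span_minimal)
  show "subspace (pow_mod scale m (k + n) \<inter> L)"
    by (rule subspace_inter[OF pow_mod_subspace L])
  show "{r *s x |r x. r \<in> ideal_pow m k \<and> x \<in> pow_mod scale m n \<inter> L} \<subseteq> pow_mod scale m (k + n) \<inter> L"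
    using scale_mem_pow_mod_add subspace_scale[OF L] by blast
qed

end

section \<open>The Artin--Rees lemma\<close>

text \<open>Multiplication by \<open>a t\<close> in the Rees algebra \<open>R[m t]\<close>, acting on the Rees module
  \<open>\<Oplus>\<^sub>n m\<^sup>n M\<close> modelled by finitely supported sequences.\<close>

definition rees_mult :: "('a::comm_ring_1 \<Rightarrow> 'b::ab_group_add \<Rightarrow> 'b) \<Rightarrow> 'a \<Rightarrow> (nat \<Rightarrow> 'b) \<Rightarrow> nat \<Rightarrow> 'b"
  where "rees_mult scale a v = shift_seq (seq_scale scale a v)"

context module
begin

lemma rees_mult_apply: "rees_mult scale a v k = (case k of 0 \<Rightarrow> 0 | Suc j \<Rightarrow> a *s v j)"
  by (simp add: rees_mult_def shift_seq_def seq_scale_apply split: nat.split)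

lemma module_hom_rees_mult: "module_hom (seq_scale scale) (seq_scale scale) (rees_mult scale a)"
  unfolding module_hom_iff
  by (auto simp: seq_module fun_eq_iff rees_mult_apply seq_scale_apply scale_right_distrib
      mult.commute split: nat.split)

lemma rees_mult_commute: "rees_mult scale a \<circ> rees_mult scale b = rees_mult scale b \<circ> rees_mult scale a"
  by (auto simp: fun_eq_iff rees_mult_apply mult.commute split: nat.split)

lemma op_span_rees_finite_support:
  "v \<in> op_span (seq_scale scale) (rees_mult scale ` A) ((\<lambda>e. 0(0 := e)) ` E) \<Longrightarrow> \<exists>d. vanishes_above v d"
proof (induction rule: op_span.induct)
  case (base g)
  then show ?case by (auto simp: vanishes_above_def)
next
  case zero
  then show ?case by (auto simp: vanishes_above_def)
next
  case (add x y)
  then obtain d1 d2 where "vanishes_above x d1" "vanishes_above y d2" by blast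
  then have "vanishes_above (x + y) (max d1 d2)" by (simp add: vanishes_above_def)
  then show ?case by blast
next
  case (scale x c)
  then obtain d where "vanishes_above x d" by blast
  then have "vanishes_above (seq_scale scale c x) d" by (simp add: vanishes_above_def seq_scale_apply)
  then show ?case by blast
next
  case (op \<phi> x)
  then obtain a d where "\<phi> = rees_mult scale a" "vanishes_above x d" by blast
  then have "vanishes_above (seq_scale scale a x) d"
    by (simp add: vanishes_above_def seq_scale_apply)
  then have "vanishes_above (\<phi> x) (Suc d)"
    by (simp add: \<open>\<phi> = rees_mult scale a\<close> rees_mult_def vanishes_above_shift_seq)
  then show ?case by blast
qed

lemma op_span_rees_coeff:
  assumes "A \<subseteq> m" and "v \<in> op_span (seq_scale scale) (rees_mult scale ` A) ((\<lambda>e. 0(0 := e)) ` E)"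
  shows "v n \<in> pow_mod scale m n"
  using assms(2)
proof (induction arbitrary: n rule: op_span.induct)
  case (base g)
  then show ?case using subspace_0[OF pow_mod_subspace] by (auto simp: pow_mod_0)
next
  case zero
  then show ?case using subspace_0[OF pow_mod_subspace] by simp
next
  case (add x y)
  then show ?case using subspace_add[OF pow_mod_subspace] by simp
next
  case (scale x c)
  then show ?case using subspace_scale[OF pow_mod_subspace] by (simp add: seq_scale_apply)
next
  case (op \<phi> x)
  then obtain a where "a \<in> m" and \<phi>: "\<phi> = rees_mult scale a" using assms(1) by blast
  show ?case
  proof (cases n)
    case 0
    then show ?thesis using subspace_0[OF pow_mod_subspace] by (simp add: \<phi> rees_mult_apply)
  next
    case (Suc j)
    have "a *s x j \<in> pow_mod scale m (Suc j)"
      using op.IH[of j] unfolding pow_mod_def by (rule scale_mem_ideal_smult_Suc[OF \<open>a \<in> m\<close>])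
    then show ?thesis by (simp add: Suc \<phi> rees_mult_apply)
  qed
qed

lemma subspace_single_preimage:
  assumes U: "module.subspace (seq_scale scale) U"
  shows "subspace {x. 0(k := x) \<in> U}"
  unfolding subspace_def
proof (intro conjI ballI allI)
  have "0(k := 0) = (0 :: nat \<Rightarrow> 'b)" by (simp add: fun_eq_iff)
  then show "0 \<in> {x. 0(k := x) \<in> U}" using module.subspace_0[OF seq_module U] by simp
next
  fix x y assume "x \<in> {x. 0(k := x) \<in> U}" "y \<in> {x. 0(k := x) \<in> U}"
  then have "0(k := x) + 0(k := y) \<in> U" using module.subspace_add[OF seq_module U] by simp
  moreover have "0(k := x) + 0(k := y) = 0(k := x + y)" by (simp add: fun_eq_iff)
  ultimately show "x + y \<in> {x. 0(k := x) \<in> U}" by simp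
next
  fix c x assume "x \<in> {x. 0(k := x) \<in> U}"
  then have "seq_scale scale c (0(k := x)) \<in> U" using module.subspace_scale[OF seq_module U] by simp
  moreover have "seq_scale scale c (0(k := x)) = 0(k := c *s x)"
    by (simp add: fun_eq_iff seq_scale_apply)
  ultimately show "c *s x \<in> {x. 0(k := x) \<in> U}" by simp
qed

lemma single_Suc_mem_op_span_rees:
  assumes m: "m = ideal_gen A" and "a \<in> m" and z: "0(k := z) \<in> op_span (seq_scale scale) (rees_mult scale ` A) G"
  shows "0(Suc k := a *s z) \<in> op_span (seq_scale scale) (rees_mult scale ` A) G"
    (is "_ \<in> ?V")
proof -
  have "A \<subseteq> {a. a *s z \<in> {x. 0(Suc k := x) \<in> ?V}}"
  proof
    fix a assume "a \<in> A"
    then have "rees_mult scale a (0(k := z)) \<in> ?V"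
      using z by (rule op_span.op[OF imageI])
    moreover have "rees_mult scale a (0(k := z)) = 0(Suc k := a *s z)"
      by (auto simp: fun_eq_iff rees_mult_apply split: nat.split)
    ultimately show "a \<in> {a. a *s z \<in> {x. 0(Suc k := x) \<in> ?V}}" by simp
  qed
  moreover have "is_ideal {a. a *s z \<in> {x. 0(Suc k := x) \<in> ?V}}"
    using module.op_closed_op_span[OF seq_module]
    by (intro is_ideal_scale_preimage subspace_single_preimage) (simp add: op_closed_def)
  ultimately have "m \<subseteq> {a. a *s z \<in> {x. 0(Suc k := x) \<in> ?V}}"
    unfolding m ideal_gen_def is_ideal_def by (rule module.span_minimal[OF module_mult])
  with \<open>a \<in> m\<close> show ?thesis by blast
qed

lemma single_mem_op_span_rees:
  assumes m: "m = ideal_gen A" and E: "span E = UNIV" and x: "x \<in> pow_mod scale m n"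
  shows "0(n := x) \<in> op_span (seq_scale scale) (rees_mult scale ` A) ((\<lambda>e. 0(0 := e)) ` E)"
    (is "_ \<in> ?V")
proof -
  have S: "subspace {x. 0(k := x) \<in> ?V}" for k
    using module.op_closed_op_span[OF seq_module]
    by (intro subspace_single_preimage) (simp add: op_closed_def)
  from x show ?thesis
  proof (induction n arbitrary: x)
    case 0
    have "E \<subseteq> {x. 0(0 := x) \<in> ?V}" by (auto intro: op_span.base)
    then have "span E \<subseteq> {x. 0(0 := x) \<in> ?V}" by (rule span_minimal[OF _ S])
    then show ?case using E by blast
  next
    case (Suc n)
    have "ideal_pow m (Suc n) \<subseteq> {r. r *s y \<in> {x. 0(Suc n := x) \<in> ?V}}" for y
    proof -
      have "{a * b |a b. a \<in> m \<and> b \<in> ideal_pow m n} \<subseteq> {r. r *s y \<in> {x. 0(Suc n := x) \<in> ?V}}"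
      proof clarify
        fix a b assume "a \<in> m" "b \<in> ideal_pow m n"
        then have "b *s y \<in> pow_mod scale m n"
          unfolding pow_mod_def ideal_smult_def by (intro span_base) blast
        then have "0(n := b *s y) \<in> ?V" by (rule Suc.IH)
        from single_Suc_mem_op_span_rees[OF m \<open>a \<in> m\<close> this]
        show "0(Suc n := (a * b) *s y) \<in> ?V" by simp
      qed
      moreover have "is_ideal {r. r *s y \<in> {x. 0(Suc n := x) \<in> ?V}}"
        by (rule is_ideal_scale_preimage[OF S])
      ultimately show ?thesis
        unfolding ideal_pow.simps ideal_mult_def ideal_gen_def is_ideal_def
        by (rule module.span_minimal[OF module_mult])
    qed
    then have "pow_mod scale m (Suc n) \<subseteq> {x. 0(Suc n := x) \<in> ?V}"
      unfolding pow_mod_def ideal_smult_def by (intro span_minimal[OF _ S]) blast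
    then show ?case using Suc.prems by blast
  qed
qed

end

text \<open>A bound for the degree-\<open>n\<close> components of any Rees submodule generated in degrees
  \<open>\<le> s\<close> by elements of \<open>\<Oplus>\<^sub>k (m\<^sup>k M \<inter> L)\<close>; truncated subtraction makes it
  \<open>m\<^sup>n M \<inter> L\<close> for \<open>n \<le> s\<close>.\<close>

definition ar_filtration ::
  "('a::comm_ring_1 \<Rightarrow> 'b::ab_group_add \<Rightarrow> 'b) \<Rightarrow> 'a set \<Rightarrow> 'b set \<Rightarrow> nat \<Rightarrow> nat \<Rightarrow> 'b set"
  where "ar_filtration scale m L s n =
    ideal_smult scale (ideal_pow m (n - s)) (pow_mod scale m (min n s) \<inter> L)"

context module
begin

lemma ar_filtration_le:
  "subspace L \<Longrightarrow> n \<le> s \<Longrightarrow> ar_filtration scale m L s n = pow_mod scale m n \<inter> L"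
  by (simp add: ar_filtration_def ideal_smult_UNIV subspace_inter pow_mod_subspace)

lemma ar_filtration_ge:
  "s \<le> n \<Longrightarrow> ar_filtration scale m L s n = ideal_smult scale (ideal_pow m (n - s)) (pow_mod scale m s \<inter> L)"
  by (simp add: ar_filtration_def)

lemma scale_mem_ar_filtration_Suc:
  assumes L: "subspace L" and a: "a \<in> m" and y: "y \<in> ar_filtration scale m L s n"
  shows "a *s y \<in> ar_filtration scale m L s (Suc n)"
proof (cases "n < s")
  case True
  then have "y \<in> pow_mod scale m n \<inter> L" using y ar_filtration_le[OF L] by simp
  then have "a *s y \<in> pow_mod scale m (Suc n) \<inter> L"
    using scale_mem_ideal_smult_Suc[OF a] subspace_scale[OF L] unfolding pow_mod_def by blast
  then show ?thesis using True ar_filtration_le[OF L] by simp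
next
  case False
  then have "y \<in> ideal_smult scale (ideal_pow m (n - s)) (pow_mod scale m s \<inter> L)"
    using y ar_filtration_ge by simp
  then have "a *s y \<in> ideal_smult scale (ideal_pow m (Suc (n - s))) (pow_mod scale m s \<inter> L)"
    by (rule scale_mem_ideal_smult_Suc[OF a])
  then show ?thesis using False ar_filtration_ge by (simp add: Suc_diff_le)
qed

lemma op_span_rees_in_ar_filtration:
  assumes L: "subspace L" and "A \<subseteq> m"
    and G: "\<And>g. g \<in> G \<Longrightarrow> vanishes_above g s \<and> (\<forall>n. g n \<in> pow_mod scale m n \<inter> L)"
    and "v \<in> op_span (seq_scale scale) (rees_mult scale ` A) G"
  shows "v n \<in> ar_filtration scale m L s n"
  using assms(4)
proof (induction arbitrary: n)
  case (base g)
  show ?case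
  proof (cases "n \<le> s")
    case True
    then show ?thesis using G[OF base] ar_filtration_le[OF L] by simp
  next
    case False
    then have "g n = 0" using G[OF base] by (simp add: vanishes_above_def)
    then show ?thesis by (simp add: ar_filtration_def subspace_0[OF ideal_smult_subspace])
  qed
next
  case zero
  then show ?case by (simp add: ar_filtration_def subspace_0[OF ideal_smult_subspace])
next
  case (add x y)
  then show ?case by (simp add: ar_filtration_def subspace_add[OF ideal_smult_subspace])
next
  case (scale x c)
  then show ?case by (simp add: ar_filtration_def seq_scale_apply subspace_scale[OF ideal_smult_subspace])
next
  case (op \<phi> x)
  then obtain a where "a \<in> m" and \<phi>: "\<phi> = rees_mult scale a" using \<open>A \<subseteq> m\<close> by blast
  show ?case
  proof (cases n)
    case 0
    then show ?thesis by (simp add: \<phi> rees_mult_apply ar_filtration_def subspace_0[OF ideal_smult_subspace])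
  next
    case (Suc j)
    then show ?thesis
      using scale_mem_ar_filtration_Suc[OF L \<open>a \<in> m\<close> op.IH[of j]] by (simp add: \<phi> rees_mult_apply)
  qed
qed

lemma op_closed_rees_range_subset:
  assumes L: "subspace L"
  shows "op_closed (seq_scale scale) (rees_mult scale ` A) {v \<in> op_span (seq_scale scale) (rees_mult scale ` A) F. range v \<subseteq> L}"
proof -
  have "op_closed (seq_scale scale) (rees_mult scale ` A) (op_span (seq_scale scale) (rees_mult scale ` A) F)"
    by (rule module.op_closed_op_span[OF seq_module])
  moreover have "op_closed (seq_scale scale) (rees_mult scale ` A) {v :: nat \<Rightarrow> 'b. range v \<subseteq> L}"
  proof (rule module.op_closedI[OF seq_module])
    show "module.subspace (seq_scale scale) {v :: nat \<Rightarrow> 'b. range v \<subseteq> L}"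
      unfolding module.subspace_def[OF seq_module]
      using subspace_0[OF L] subspace_add[OF L] subspace_scale[OF L]
      by (auto simp: seq_scale_apply image_subset_iff)
  next
    fix \<phi> v assume "\<phi> \<in> rees_mult scale ` A" "v \<in> {v :: nat \<Rightarrow> 'b. range v \<subseteq> L}"
    then show "\<phi> v \<in> {v :: nat \<Rightarrow> 'b. range v \<subseteq> L}"
      using subspace_0[OF L] subspace_scale[OF L]
      by (auto simp: rees_mult_apply image_subset_iff split: nat.split)
  qed
  ultimately show ?thesis
    unfolding op_closed_def Collect_conj_eq Collect_mem_eq
    by (simp add: module.subspace_inter[OF seq_module])
qed

lemma ar_filtration_bound:
  assumes noetherian: "noetherian_ring TYPE('a)" and "finite A" "A \<subseteq> m" "finite E"
    and L: "subspace L"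
  shows "\<exists>s. \<forall>v\<in>op_span (seq_scale scale) (rees_mult scale ` A) ((\<lambda>e. 0(0 := e)) ` E).
           range v \<subseteq> L \<longrightarrow> (\<forall>n. v n \<in> ar_filtration scale m L s n)"
proof -
  let ?Ps = "rees_mult scale ` A"
  let ?V = "op_span (seq_scale scale) ?Ps ((\<lambda>e. 0(0 := e)) ` E)"
  let ?U = "{v \<in> ?V. range v \<subseteq> L}"
  have noeth: "op_noetherian (seq_scale scale) ?Ps ?V"
  proof (rule module.op_noetherian_op_span[OF seq_module noetherian])
    show "finite ?Ps" "finite ((\<lambda>e. 0(0 := e)) ` E)" using assms(2,4) by simp_all
    show "\<forall>\<phi>\<in>?Ps. module_hom (seq_scale scale) (seq_scale scale) \<phi>"
      using module_hom_rees_mult by blast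
    show "\<forall>\<phi>\<in>?Ps. \<forall>\<chi>\<in>?Ps. \<phi> \<circ> \<chi> = \<chi> \<circ> \<phi>"
      using rees_mult_commute by blast
  qed
  have "?U \<subseteq> ?V" by blast
  from op_noetherianD[OF noeth op_closed_rees_range_subset[OF L] this]
  obtain G where G: "finite G" "?U = op_span (seq_scale scale) ?Ps G" by auto
  have "G \<subseteq> ?U" unfolding G(2) by (rule op_span_superset)
  then have G_V: "g \<in> ?V" and G_L: "range g \<subseteq> L" if "g \<in> G" for g
    using that by auto
  obtain s where "\<forall>g\<in>G. vanishes_above g s"
    using finite_vanishes_above_bound[OF G(1) op_span_rees_finite_support[OF G_V]] by blast
  moreover have "g n \<in> pow_mod scale m n \<inter> L" if "g \<in> G" for g n
    using op_span_rees_coeff[OF \<open>A \<subseteq> m\<close> G_V[OF that]] G_L[OF that] by auto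
  ultimately have "v n \<in> ar_filtration scale m L s n" if "v \<in> ?U" for v n
    using that G(2) op_span_rees_in_ar_filtration[OF L \<open>A \<subseteq> m\<close>, of G s v n] by simp
  then show ?thesis by blast
qed

lemma artin_rees:
  assumes noetherian: "noetherian_ring TYPE('a)" and m: "is_ideal m"
    and fg: "finitely_generated_module scale" and L: "subspace L"
  shows "\<exists>s. \<forall>n\<ge>s. pow_mod scale m n \<inter> L
                    = ideal_smult scale (ideal_pow m (n - s)) (pow_mod scale m s \<inter> L)"
proof -
  obtain A where A: "finite A" "m = ideal_gen A"
    using noetherian m unfolding noetherian_ring_def by blast
  obtain E where E: "finite E" "span E = UNIV"
    using fg unfolding finitely_generated_module_def by blast
  have "A \<subseteq> m" using A(2) module.span_superset[OF module_mult] unfolding ideal_gen_def by blast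
  obtain s where s: "\<And>v n. v \<in> op_span (seq_scale scale) (rees_mult scale ` A) ((\<lambda>e. 0(0 := e)) ` E) \<Longrightarrow>
      range v \<subseteq> L \<Longrightarrow> v n \<in> ar_filtration scale m L s n"
    using ar_filtration_bound[OF noetherian A(1) \<open>A \<subseteq> m\<close> E(1) L] by metis
  show ?thesis
  proof (intro exI[of _ s] allI impI)
    fix n assume "s \<le> n"
    show "pow_mod scale m n \<inter> L = ideal_smult scale (ideal_pow m (n - s)) (pow_mod scale m s \<inter> L)"
    proof
      show "ideal_smult scale (ideal_pow m (n - s)) (pow_mod scale m s \<inter> L) \<subseteq> pow_mod scale m n \<inter> L"
        using ideal_smult_pow_inter_subset[OF L, of m "n - s" s] \<open>s \<le> n\<close> by simp
      show "pow_mod scale m n \<inter> L \<subseteq> ideal_smult scale (ideal_pow m (n - s)) (pow_mod scale m s \<inter> L)"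
      proof
        fix x assume x: "x \<in> pow_mod scale m n \<inter> L"
        then have "0(n := x) \<in> op_span (seq_scale scale) (rees_mult scale ` A) ((\<lambda>e. 0(0 := e)) ` E)"
          using single_mem_op_span_rees[OF A(2) E(2)] by blast
        moreover have "range (0(n := x)) \<subseteq> L" using x subspace_0[OF L] by auto
        ultimately have "x \<in> ar_filtration scale m L s n" using s[of "0(n := x)" n] by simp
        then show "x \<in> ideal_smult scale (ideal_pow m (n - s)) (pow_mod scale m s \<inter> L)"
          using ar_filtration_ge[OF \<open>s \<le> n\<close>] by simp
      qed
    qed
  qed
qed

end

section \<open>Initial modules\<close>

lemma set_plus_decompose:
  assumes "set_plus L P = set_plus K P" and "0 \<in> P" and "l \<in> L"
  shows "\<exists>k\<in>K. \<exists>z\<in>P. l = k + z"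
proof -
  have "l + 0 \<in> set_plus L P" using assms(2,3) unfolding set_plus_def by blast
  then show ?thesis using assms(1) unfolding set_plus_def by auto
qed

context module
begin

lemma subspace_set_plus:
  assumes A: "subspace A" and B: "subspace B"
  shows "subspace (set_plus A B)"
  unfolding subspace_def set_plus_def
proof (intro conjI ballI allI)
  show "0 \<in> {a + b |a b. a \<in> A \<and> b \<in> B}"
    using subspace_0[OF A] subspace_0[OF B] by force
next
  fix x y assume "x \<in> {a + b |a b. a \<in> A \<and> b \<in> B}" "y \<in> {a + b |a b. a \<in> A \<and> b \<in> B}"
  then obtain a b a' b' where "a \<in> A" "b \<in> B" "a' \<in> A" "b' \<in> B" "x = a + b" "y = a' + b'"
    by blast
  moreover have "a + b + (a' + b') = (a + a') + (b + b')" by (simp add: algebra_simps)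
  ultimately show "x + y \<in> {a + b |a b. a \<in> A \<and> b \<in> B}"
    using subspace_add[OF A] subspace_add[OF B] by blast
next
  fix c x assume "x \<in> {a + b |a b. a \<in> A \<and> b \<in> B}"
  then obtain a b where "a \<in> A" "b \<in> B" "x = a + b" by blast
  moreover have "c *s (a + b) = c *s a + c *s b" by (rule scale_right_distrib)
  ultimately show "c *s x \<in> {a + b |a b. a \<in> A \<and> b \<in> B}"
    using subspace_scale[OF A] subspace_scale[OF B] by blast
qed

lemma coset_eq:
  assumes P: "subspace P" and "x - k \<in> P"
  shows "coset x P = coset k P"
proof -
  have "x + y = k + ((x - k) + y)" "k + y = x + (y - (x - k))" for y by simp_all
  then show ?thesis
    using subspace_add[OF P \<open>x - k \<in> P\<close>] subspace_diff[OF P _ \<open>x - k \<in> P\<close>]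
    unfolding coset_def by blast
qed

lemma initial_module_comp_subset:
  assumes "L \<inter> pow_mod scale m i \<subseteq> set_plus (K \<inter> pow_mod scale m i) (pow_mod scale m (Suc i))"
  shows "initial_module_comp scale m L i \<subseteq> initial_module_comp scale m K i"
proof
  fix c assume "c \<in> initial_module_comp scale m L i"
  then obtain x where x: "x \<in> L \<inter> pow_mod scale m i" "c = coset x (pow_mod scale m (Suc i))"
    unfolding initial_module_comp_def by blast
  then obtain k z where k: "k \<in> K \<inter> pow_mod scale m i" and "z \<in> pow_mod scale m (Suc i)" "x = k + z"
    using assms unfolding set_plus_def by blast
  then have "c = coset k (pow_mod scale m (Suc i))"
    using x(2) coset_eq[OF pow_mod_subspace] by simp
  with k show "c \<in> initial_module_comp scale m K i"
    unfolding initial_module_comp_def by blast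
qed

lemma lift_initial_low_degree:
  assumes eq: "set_plus L (pow_mod scale m N) = set_plus K (pow_mod scale m N)" and "i < N"
  shows "L \<inter> pow_mod scale m i \<subseteq> set_plus (K \<inter> pow_mod scale m i) (pow_mod scale m (Suc i))"
proof
  fix x assume x: "x \<in> L \<inter> pow_mod scale m i"
  then obtain k z where "k \<in> K" "z \<in> pow_mod scale m N" and xkz: "x = k + z"
    using set_plus_decompose[OF eq subspace_0[OF pow_mod_subspace]] by blast
  then have z: "z \<in> pow_mod scale m (Suc i)"
    using pow_mod_antimono[of "Suc i" N] \<open>i < N\<close> by auto
  then have "z \<in> pow_mod scale m i" using pow_mod_antimono[of i "Suc i" m] by auto
  have "k = x - z" using xkz by simp
  also have "\<dots> \<in> pow_mod scale m i"
    using x \<open>z \<in> pow_mod scale m i\<close> by (intro subspace_diff[OF pow_mod_subspace]) auto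
  finally have "k \<in> pow_mod scale m i" .
  with \<open>k \<in> K\<close> z xkz show "x \<in> set_plus (K \<inter> pow_mod scale m i) (pow_mod scale m (Suc i))"
    unfolding set_plus_def by blast
qed

lemma lift_initial_high_degree:
  assumes K: "subspace K"
    and eq: "set_plus L (pow_mod scale m N) = set_plus K (pow_mod scale m N)"
    and "s < N" and "s \<le> i"
    and ar: "pow_mod scale m i \<inter> L = ideal_smult scale (ideal_pow m (i - s)) (pow_mod scale m s \<inter> L)"
  shows "L \<inter> pow_mod scale m i \<subseteq> set_plus (K \<inter> pow_mod scale m i) (pow_mod scale m (Suc i))"
proof -
  let ?T = "set_plus (K \<inter> pow_mod scale m i) (pow_mod scale m (Suc i))"
  have "{r *s l |r l. r \<in> ideal_pow m (i - s) \<and> l \<in> pow_mod scale m s \<inter> L} \<subseteq> ?T"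
  proof clarify
    fix r l assume r: "r \<in> ideal_pow m (i - s)" and l: "l \<in> pow_mod scale m s" "l \<in> L"
    obtain k z where "k \<in> K" "z \<in> pow_mod scale m N" and lkz: "l = k + z"
      using set_plus_decompose[OF eq subspace_0[OF pow_mod_subspace] l(2)] by blast
    then have "z \<in> pow_mod scale m s"
      using pow_mod_antimono[of s N] \<open>s < N\<close> by auto
    have "k = l - z" using lkz by simp
    also have "\<dots> \<in> pow_mod scale m s"
      by (rule subspace_diff[OF pow_mod_subspace l(1) \<open>z \<in> pow_mod scale m s\<close>])
    finally have "r *s k \<in> pow_mod scale m (i - s + s)"
      by (rule scale_mem_pow_mod_add[OF r])
    then have k_i: "r *s k \<in> K \<inter> pow_mod scale m i"
      using \<open>s \<le> i\<close> subspace_scale[OF K \<open>k \<in> K\<close>] by simp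
    have "r *s z \<in> pow_mod scale m (i - s + N)"
      by (rule scale_mem_pow_mod_add[OF r \<open>z \<in> pow_mod scale m N\<close>])
    moreover have "pow_mod scale m (i - s + N) \<subseteq> pow_mod scale m (Suc i)"
      using \<open>s < N\<close> \<open>s \<le> i\<close> by (intro pow_mod_antimono) linarith
    ultimately have z_i: "r *s z \<in> pow_mod scale m (Suc i)" by blast
    have "r *s l = r *s k + r *s z" using lkz by (simp add: scale_right_distrib)
    with k_i z_i show "r *s l \<in> ?T" unfolding set_plus_def by blast
  qed
  moreover have "subspace ?T"
    by (intro subspace_set_plus subspace_inter K pow_mod_subspace)
  ultimately have "ideal_smult scale (ideal_pow m (i - s)) (pow_mod scale m s \<inter> L) \<subseteq> ?T"
    unfolding ideal_smult_def by (rule span_minimal)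
  with ar show ?thesis by blast
qed

end

theorem proposition3p1:
  fixes scale :: "'a::comm_ring_1 \<Rightarrow> 'b::ab_group_add \<Rightarrow> 'b"
    and m :: "'a set" and L K :: "'b set" and N :: nat
  assumes "noetherian_ring TYPE('a)"
    and "local_ring_with m"
    and "module scale"
    and "finitely_generated_module scale"
    and "module.subspace scale L"
    and "module.subspace scale K"
    and "N > artin_rees_number scale m L"
    and "set_plus L (pow_mod scale m N) = set_plus K (pow_mod scale m N)"
  shows "initial_module_le scale m L K"
proof -
  interpret module scale by fact
  have "is_ideal m" using assms(2) unfolding local_ring_with_def maximal_ideal_def by blast
  define s where "s = artin_rees_number scale m L"
  \<comment> \<open>\<open>LEAST\<close> says nothing unless some \<open>s\<close> works, hence the Artin--Rees lemma.\<close>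
  have ar: "\<forall>n\<ge>s. pow_mod scale m n \<inter> L
                   = ideal_smult scale (ideal_pow m (n - s)) (pow_mod scale m s \<inter> L)"
    unfolding s_def artin_rees_number_def
    by (rule LeastI_ex[OF artin_rees[OF assms(1) \<open>is_ideal m\<close> assms(4,5)]])
  have "L \<inter> pow_mod scale m i \<subseteq> set_plus (K \<inter> pow_mod scale m i) (pow_mod scale m (Suc i))" for i
  proof (cases "i < N")
    case True
    then show ?thesis by (rule lift_initial_low_degree[OF assms(8)])
  next
    case False
    with assms(7) have "s < N" "s \<le> i" by (simp_all add: s_def)
    moreover from ar \<open>s \<le> i\<close>
    have "pow_mod scale m i \<inter> L = ideal_smult scale (ideal_pow m (i - s)) (pow_mod scale m s \<inter> L)"
      by blast
    ultimately show ?thesis by (rule lift_initial_high_degree[OF assms(6,8)])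
  qed
  then show ?thesis
    unfolding initial_module_le_def using initial_module_comp_subset by blast
qed

end
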